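(* Let $M, N$ be $\lambda$-terms with $M \twoheadrightarrow_\beta N$. Then $M$ and $N$ have the same Böhm tree, and $\mathrm{cBT}(M) \ge \mathrm{cBT}(N)$; i.e. at every position either both clocked Böhm trees are unannotated, or both are annotated, with natural numbers $k_1$ (in $\mathrm{cBT}(M)$) and $k_2$ (in $\mathrm{cBT}(N)$) satisfying $k_1 \ge k_2$. (Clocks are accelerated under reduction and slowed down under expansion.)
   Context: Untyped $\lambda$-calculus with $\beta$-reduction; $\twoheadrightarrow_\beta$ is its reflexive–transitive closure. A head reduction step is a step $\lambda x_1\ldots x_n.(\lambda y.P)Q Q_1\ldots Q_m \to \lambda x_1\ldots x_n.P[y:=Q] Q_1\ldots Q_m$ ($n,m\ge0$); a head normal form (hnf) is a term $\lambda x_1\ldots x_n.\,y M_1\ldots M_m$; a term has an hnf if it reduces to one. The clocked Böhm tree $\mathrm{cBT}(t)$ is the (possibly infinite) annotated term defined coinductively: if $t$ has no hnf, $\mathrm{cBT}(t) = \bot$ (unannotated); otherwise there is a head reduction of some length $k$ from $t$ to an hnf $\lambda x_1\ldots x_n.\,y M_1\ldots M_m$, and $\mathrm{cBT}(t)$ is the term $\lambda x_1\ldots x_n.\,y\,\mathrm{cBT}(M_1)\ldots\mathrm{cBT}(M_m)$ whose root is annotated with $k$. The Böhm tree $\mathrm{BT}(t)$ is obtained from $\mathrm{cBT}(t)$ by erasing all annotations. Positions in such trees are finite sequences over $\{0,1,2\}$ (0: body of an abstraction, 1: function part of an application, 2: argument part). *)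

theory Defs
  imports Main
begin

datatype (discs_sels) dB = Var nat | App dB dB | Abs dB

primrec lift :: "dB \<Rightarrow> nat \<Rightarrow> dB" where
  "lift (Var i) k = (if i < k then Var i else Var (i + 1))"
| "lift (App s t) k = App (lift s k) (lift t k)"
| "lift (Abs s) k = Abs (lift s (k + 1))"

primrec subst :: "dB \<Rightarrow> dB \<Rightarrow> nat \<Rightarrow> dB" where
  "subst (Var i) s k = (if k < i then Var (i - 1) else if i = k then s else Var i)"
| "subst (App t u) s k = App (subst t s k) (subst u s k)"
| "subst (Abs t) s k = Abs (subst t (lift s 0) (k + 1))"

inductive beta :: "dB \<Rightarrow> dB \<Rightarrow> bool" where
  beta_redex: "beta (App (Abs s) t) (subst s t 0)"
| beta_appL: "beta s t \<Longrightarrow> beta (App s u) (App t u)"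
| beta_appR: "beta s t \<Longrightarrow> beta (App u s) (App u t)"
| beta_abs: "beta s t \<Longrightarrow> beta (Abs s) (Abs t)"

fun is_abs :: "dB \<Rightarrow> bool" where
  "is_abs (Abs _) = True"
| "is_abs _ = False"

text \<open>Head reduction step:
  \<open>\<lambda>x1..xn.(\<lambda>y.P) Q Q1..Qm \<rightarrow> \<lambda>x1..xn. P[y:=Q] Q1..Qm\<close>.\<close>
inductive hred :: "dB \<Rightarrow> dB \<Rightarrow> bool" where
  hred_redex: "hred (App (Abs s) t) (subst s t 0)"
| hred_app: "hred s t \<Longrightarrow> \<not> is_abs s \<Longrightarrow> hred (App s u) (App t u)"
| hred_abs: "hred s t \<Longrightarrow> hred (Abs s) (Abs t)"

fun head_var_app :: "dB \<Rightarrow> bool" where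
  "head_var_app (Var _) = True"
| "head_var_app (App s _) = head_var_app s"
| "head_var_app (Abs _) = False"

fun is_hnf :: "dB \<Rightarrow> bool" where
  "is_hnf (Abs s) = is_hnf s"
| "is_hnf t = head_var_app t"

definition has_hnf :: "dB \<Rightarrow> bool" where
  "has_hnf t \<longleftrightarrow> (\<exists>u. beta\<^sup>*\<^sup>* t u \<and> is_hnf u)"

text \<open>A head reduction of length k to an hnf (chosen; it is unique since head reduction
  is deterministic and hnfs are head-normal).\<close>
definition head_red_to_hnf :: "dB \<Rightarrow> nat \<times> dB" where
  "head_red_to_hnf t = (SOME (k, h). (hred ^^ k) t h \<and> is_hnf h)"

definition clock :: "dB \<Rightarrow> nat" where
  "clock t = fst (head_red_to_hnf t)"

definition hnf_of :: "dB \<Rightarrow> dB" where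
  "hnf_of t = snd (head_red_to_hnf t)"

text \<open>Possibly infinite annotated terms; the annotation \<open>nat option\<close> is \<open>None\<close> for an
  unannotated node. \<open>ABot\<close> is the unannotated \<open>\<bottom>\<close>.\<close>
codatatype abt = ABot | AVar "nat option" nat | AAbs "nat option" abt | AApp "nat option" abt abt

codatatype bt = BBot | BVar nat | BAbs bt | BApp bt bt

text \<open>\<open>cbt_aux True t\<close> = cBT(t); \<open>cbt_aux False h\<close> unfolds the (unannotated) inner nodes of
  an hnf spine, whose arguments are again turned into clocked Boehm trees.\<close>
primcorec cbt_aux :: "bool \<Rightarrow> dB \<Rightarrow> abt" where
  "cbt_aux r t =
    (if r \<and> \<not> has_hnf t then ABot
     else (case (if r then hnf_of t else t) of
       Var y \<Rightarrow> AVar (if r then Some (clock t) else None) y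
     | Abs s \<Rightarrow> AAbs (if r then Some (clock t) else None) (cbt_aux False s)
     | App f u \<Rightarrow> AApp (if r then Some (clock t) else None) (cbt_aux False f) (cbt_aux True u)))"

definition cBT :: "dB \<Rightarrow> abt" where
  "cBT t = cbt_aux True t"

primcorec erase :: "abt \<Rightarrow> bt" where
  "erase T = (case T of
     ABot \<Rightarrow> BBot
   | AVar _ y \<Rightarrow> BVar y
   | AAbs _ s \<Rightarrow> BAbs (erase s)
   | AApp _ f u \<Rightarrow> BApp (erase f) (erase u))"

definition BT :: "dB \<Rightarrow> bt" where
  "BT t = erase (cBT t)"

text \<open>Positions: lists over {0,1,2} (0 body of abstraction, 1 function part, 2 argument).\<close>
fun subtree_at :: "abt \<Rightarrow> nat list \<Rightarrow> abt option" where
  "subtree_at T [] = Some T"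
| "subtree_at (AAbs _ s) (i # p) = (if i = 0 then subtree_at s p else None)"
| "subtree_at (AApp _ f u) (i # p) =
     (if i = 1 then subtree_at f p else if i = 2 then subtree_at u p else None)"
| "subtree_at _ (_ # _) = None"

fun root_ann :: "abt \<Rightarrow> nat option" where
  "root_ann ABot = None"
| "root_ann (AVar a _) = a"
| "root_ann (AAbs a _) = a"
| "root_ann (AApp a _ _) = a"

text \<open>Annotation at a position (None if unannotated or no such position).\<close>
definition clock_at :: "abt \<Rightarrow> nat list \<Rightarrow> nat option" where
  "clock_at T p = Option.bind (subtree_at T p) root_ann"

end

theory Submission
  imports Defs
begin

text \<open>
  Parallel reduction \<open>\<Rightarrow>\<close> generates \<open>\<twoheadrightarrow>\<^sub>\<beta>\<close>, so it suffices to compare \<open>M\<close> with a parallel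
  reduct \<open>N\<close>. Every head step of \<open>M\<close> is matched by at most one head step of \<open>N\<close>: the head
  redex of \<open>M\<close> is either contracted by \<open>M \<Rightarrow> N\<close> or survives as the head redex of \<open>N\<close>.
  So if \<open>M\<close> head-reduces to an hnf in \<open>k\<close> steps, then \<open>N\<close> head-reduces to an hnf in at most
  \<open>k\<close> steps, and the two hnfs are again related by \<open>\<twoheadrightarrow>\<^sub>\<beta>\<close>; hence they have the same head
  variable and shape, with pairwise related arguments. That a term with an hnf head-reduces to
  one is the head normalisation theorem, proved via Takahashi's factorisation of \<open>\<Rightarrow>\<close> into
  head steps followed by an internal parallel step. Coinduction along the trees then gives the
  theorem.
\<close>

lemma lift_lift: "i < k + 1 \<Longrightarrow> lift (lift t i) (Suc k) = lift (lift t k) i"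
  by (induct t arbitrary: i k) auto

lemma lift_subst [simp]:
  "j < i + 1 \<Longrightarrow> lift (subst t s j) i = subst (lift t (i + 1)) (lift s i) j"
  by (induct t arbitrary: i j s) (auto simp: lift_lift)

lemma lift_subst_lt:
  "i < j + 1 \<Longrightarrow> lift (subst t s j) i = subst (lift t i) (lift s i) (j + 1)"
  by (induct t arbitrary: i j s) (auto simp: lift_lift)

lemma subst_lift [simp]: "subst (lift t k) s k = t"
  by (induct t arbitrary: k s) simp_all

lemma subst_subst:
  "i < j + 1 \<Longrightarrow> subst (subst t (lift v i) (Suc j)) (subst u v j) i = subst (subst t u i) v j"
  by (induct t arbitrary: i j u v) (auto simp: lift_lift [symmetric] lift_subst_lt)

inductive par :: "dB \<Rightarrow> dB \<Rightarrow> bool" where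
  par_Var: "par (Var n) (Var n)"
| par_Abs: "par s t \<Longrightarrow> par (Abs s) (Abs t)"
| par_App: "par s t \<Longrightarrow> par u v \<Longrightarrow> par (App s u) (App t v)"
| par_beta: "par s s' \<Longrightarrow> par u u' \<Longrightarrow> par (App (Abs s) u) (subst s' u' 0)"

inductive_cases par_AbsE: "par (Abs s) t"
inductive_cases par_AppE: "par (App s u) t"

lemma par_refl [simp]: "par t t"
  by (induct t) (auto intro: par.intros)

lemma par_lift: "par s t \<Longrightarrow> par (lift s i) (lift t i)"
proof (induct arbitrary: i rule: par.induct)
  case (par_beta s s' u u')
  then show ?case
    using par.par_beta [of "lift s (Suc i)" "lift s' (Suc i)" "lift u i" "lift u' i"] by simp
qed (auto intro: par.intros)

lemma par_subst: "par s s' \<Longrightarrow> par u u' \<Longrightarrow> par (subst s u k) (subst s' u' k)"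
proof (induct arbitrary: u u' k rule: par.induct)
  case (par_Var n)
  then show ?case
    by (auto intro: par.intros)
next
  case (par_Abs s t)
  then show ?case
    by (simp add: par.par_Abs par_lift)
next
  case (par_App s t u v)
  then show ?case
    by (simp add: par.par_App)
next
  case (par_beta s s' v v')
  then have "par (App (Abs (subst s (lift u 0) (Suc k))) (subst v u k))
      (subst (subst s' (lift u' 0) (Suc k)) (subst v' u' k) 0)"
    by (simp add: par.par_beta par_lift)
  then show ?case
    using subst_subst [of 0 k s' u' v'] by simp
qed

lemma beta_par: "beta s t \<Longrightarrow> par s t"
  by (induct rule: beta.induct) (auto intro: par.intros)

lemma rtrancl_beta_Abs: "beta\<^sup>*\<^sup>* s t \<Longrightarrow> beta\<^sup>*\<^sup>* (Abs s) (Abs t)"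
  by (induct rule: rtranclp_induct) (auto intro: beta.intros rtranclp.rtrancl_into_rtrancl)

lemma rtrancl_beta_AppL: "beta\<^sup>*\<^sup>* s t \<Longrightarrow> beta\<^sup>*\<^sup>* (App s u) (App t u)"
  by (induct rule: rtranclp_induct) (auto intro: beta.intros rtranclp.rtrancl_into_rtrancl)

lemma rtrancl_beta_AppR: "beta\<^sup>*\<^sup>* s t \<Longrightarrow> beta\<^sup>*\<^sup>* (App u s) (App u t)"
  by (induct rule: rtranclp_induct) (auto intro: beta.intros rtranclp.rtrancl_into_rtrancl)

lemma par_rtrancl_beta: "par s t \<Longrightarrow> beta\<^sup>*\<^sup>* s t"
proof (induct rule: par.induct)
  case (par_App s t u v)
  then show ?case
    using rtrancl_beta_AppL rtrancl_beta_AppR by (meson rtranclp_trans)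
next
  case (par_beta s s' u u')
  then have "beta\<^sup>*\<^sup>* (App (Abs s) u) (App (Abs s') u')"
    using rtrancl_beta_AppL rtrancl_beta_AppR rtrancl_beta_Abs by (meson rtranclp_trans)
  then show ?case
    by (rule rtranclp.rtrancl_into_rtrancl) (rule beta.beta_redex)
qed (simp_all add: rtrancl_beta_Abs)

inductive_cases hred_VarE: "hred (Var n) t"
inductive_cases hred_AbsE: "hred (Abs s) t"
inductive_cases hred_AppE: "hred (App s u) t"

lemma hred_beta: "hred s t \<Longrightarrow> beta s t"
  by (induct rule: hred.induct) (auto intro: beta.intros)

lemma rtrancl_hred_beta: "hred\<^sup>*\<^sup>* s t \<Longrightarrow> beta\<^sup>*\<^sup>* s t"
  by (induct rule: rtranclp_induct) (auto dest: hred_beta intro: rtranclp.rtrancl_into_rtrancl)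

lemma hred_lift: "hred s t \<Longrightarrow> hred (lift s i) (lift t i)"
proof (induct arbitrary: i rule: hred.induct)
  case (hred_redex s t)
  then show ?case
    using hred.hred_redex [of "lift s (Suc i)" "lift t i"] by simp
next
  case (hred_app s t u)
  then show ?case
    by (cases s) (auto intro: hred.intros)
qed (auto intro: hred.intros)

lemma hred_not_Var: "hred s t \<Longrightarrow> \<not> is_Var s"
  by (induct rule: hred.induct) auto

lemma hred_subst: "hred s t \<Longrightarrow> hred (subst s u k) (subst t u k)"
proof (induct arbitrary: u k rule: hred.induct)
  case (hred_redex s t)
  then show ?case
    using hred.hred_redex [of "subst s (lift u 0) (Suc k)" "subst t u k"]
      subst_subst [of 0 k s u t] by simp
next
  case (hred_app s t v)
  then show ?case
    by (cases s) (auto intro: hred.intros dest: hred_not_Var)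
qed (auto intro: hred.intros)

lemma hred_det: "hred x y \<Longrightarrow> hred x z \<Longrightarrow> y = z"
proof (induct arbitrary: z rule: hred.induct)
  case (hred_redex s t)
  from hred_redex show ?case
    by (cases rule: hred.cases) simp_all
next
  case (hred_app s t u)
  note IH = hred_app.hyps(2) and not_abs = hred_app.hyps(3)
  from hred_app.prems show ?case
  proof (cases rule: hred.cases)
    case hred_redex
    with not_abs show ?thesis
      by simp
  next
    case (hred_app t')
    with IH show ?thesis
      by simp
  qed
next
  case (hred_abs s t)
  note IH = hred_abs.hyps(2)
  from hred_abs.prems show ?case
  proof (cases rule: hred.cases)
    case (hred_abs t')
    with IH show ?thesis
      by simp
  qed
qed

lemma head_var_app_no_hred: "head_var_app x \<Longrightarrow> \<not> hred x y"
  by (induct x arbitrary: y) (auto elim: hred_VarE hred_AppE)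

lemma hnf_no_hred: "is_hnf x \<Longrightarrow> \<not> hred x y"
proof (induct x arbitrary: y)
  case (App f u)
  then show ?case
    using head_var_app_no_hred [of "App f u"] by simp
qed (auto elim: hred_VarE hred_AbsE)

lemma hred_relpow_hnf_unique:
  "(hred ^^ k) x h \<Longrightarrow> is_hnf h \<Longrightarrow> (hred ^^ j) x h' \<Longrightarrow> is_hnf h' \<Longrightarrow> k = j \<and> h = h'"
proof (induct k arbitrary: x j)
  case 0
  then have "x = h"
    by simp
  with 0 show ?case
    by (cases j) (simp, metis hnf_no_hred relpowp_Suc_D2)
next
  case (Suc k)
  from Suc.prems(1) obtain y where y: "hred x y" "(hred ^^ k) y h"
    by (metis relpowp_Suc_D2)
  show ?case
  proof (cases j)
    case 0
    with Suc.prems y(1) show ?thesis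
      by (auto dest: hnf_no_hred)
  next
    case (Suc j')
    with Suc.prems(3) obtain y' where "hred x y'" "(hred ^^ j') y' h'"
      by (metis relpowp_Suc_D2)
    with y Suc.hyps Suc.prems(2,4) \<open>j = Suc j'\<close> show ?thesis
      by (metis hred_det)
  qed
qed

lemma clock_hnf_of_eq:
  assumes "(hred ^^ k) t H" "is_hnf H"
  shows "clock t = k" "hnf_of t = H"
proof -
  let ?P = "\<lambda>(k, h). (hred ^^ k) t h \<and> is_hnf h"
  have "?P (k, H)"
    using assms by simp
  then have "?P (head_red_to_hnf t)"
    unfolding head_red_to_hnf_def by (rule someI)
  then have "head_red_to_hnf t = (k, H)"
    using hred_relpow_hnf_unique [OF _ _ assms] by (auto split: prod.splits)
  then show "clock t = k" "hnf_of t = H"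
    by (simp_all add: clock_def hnf_of_def)
qed

section \<open>Takahashi's factorisation of parallel reduction\<close>

text \<open>Internal parallel reduction, which never contracts the head redex; \<open>ipar_nabs\<close> is its
  restriction to non-abstractions.\<close>

inductive ipar_nabs :: "dB \<Rightarrow> dB \<Rightarrow> bool" where
  ipar_nabs_Var: "ipar_nabs (Var n) (Var n)"
| ipar_nabs_redex: "par s s' \<Longrightarrow> par u u' \<Longrightarrow> ipar_nabs (App (Abs s) u) (App (Abs s') u')"
| ipar_nabs_App: "ipar_nabs s t \<Longrightarrow> par u u' \<Longrightarrow> ipar_nabs (App s u) (App t u')"

inductive ipar :: "dB \<Rightarrow> dB \<Rightarrow> bool" where
  ipar_Abs: "ipar s t \<Longrightarrow> ipar (Abs s) (Abs t)"
| ipar_nabs: "ipar_nabs s t \<Longrightarrow> ipar s t"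

lemma ipar_nabs_par: "ipar_nabs s t \<Longrightarrow> par s t"
  by (induct rule: ipar_nabs.induct) (auto intro: par.intros)

lemma ipar_nabs_not_abs: "ipar_nabs s t \<Longrightarrow> \<not> is_abs s \<and> \<not> is_abs t"
  by (induct rule: ipar_nabs.induct) auto

lemma ipar_not_abs: "ipar s t \<Longrightarrow> \<not> is_abs s \<Longrightarrow> ipar_nabs s t"
  by (cases rule: ipar.cases) auto

lemma ipar_nabs_lift: "ipar_nabs s t \<Longrightarrow> ipar_nabs (lift s i) (lift t i)"
  by (induct arbitrary: i rule: ipar_nabs.induct) (auto intro: ipar_nabs.intros par_lift)

lemma ipar_lift: "ipar s t \<Longrightarrow> ipar (lift s i) (lift t i)"
  by (induct arbitrary: i rule: ipar.induct) (auto intro: ipar.intros ipar_nabs_lift)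

text \<open>Keeping \<open>N\<close> in view is
  needed to lift head steps of \<open>s\<close> to \<open>App s b\<close>: once \<open>s\<close> has become an abstraction,
  \<open>par s t\<close> makes \<open>App s b \<Rightarrow> App t b'\<close> an internal step.\<close>

definition hred_towards :: "dB \<Rightarrow> dB \<Rightarrow> dB \<Rightarrow> bool" where
  "hred_towards N x y \<longleftrightarrow> hred x y \<and> par y N"

definition head_ipar :: "dB \<Rightarrow> dB \<Rightarrow> bool" where
  "head_ipar M N \<longleftrightarrow> (\<exists>L. (hred_towards N)\<^sup>*\<^sup>* M L \<and> ipar L N)"

lemma rtrancl_hred_towards_hred: "(hred_towards N)\<^sup>*\<^sup>* x y \<Longrightarrow> hred\<^sup>*\<^sup>* x y"
  by (induct rule: rtranclp_induct) (auto simp: hred_towards_def intro: rtranclp.rtrancl_into_rtrancl)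

lemma rtrancl_hred_towards_map:
  assumes "(hred_towards N)\<^sup>*\<^sup>* x y"
    and "\<And>x y. hred_towards N x y \<Longrightarrow> hred_towards (g N) (f x) (f y)"
  shows "(hred_towards (g N))\<^sup>*\<^sup>* (f x) (f y)"
  using assms(1) by (induct rule: rtranclp_induct) (auto intro: assms(2) rtranclp.rtrancl_into_rtrancl)

lemma head_ipar_if_ipar: "ipar M N \<Longrightarrow> head_ipar M N"
  unfolding head_ipar_def by blast

lemma head_ipar_prepend: "(hred_towards N)\<^sup>*\<^sup>* M M' \<Longrightarrow> head_ipar M' N \<Longrightarrow> head_ipar M N"
  unfolding head_ipar_def by (meson rtranclp_trans)

lemma head_ipar_lift: "head_ipar s t \<Longrightarrow> head_ipar (lift s i) (lift t i)"
  unfolding head_ipar_def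
  using rtrancl_hred_towards_map [where f = "\<lambda>x. lift x i" and g = "\<lambda>x. lift x i"]
  by (meson hred_towards_def hred_lift par_lift ipar_lift)

lemma head_ipar_Abs: "head_ipar s t \<Longrightarrow> head_ipar (Abs s) (Abs t)"
  unfolding head_ipar_def
  using rtrancl_hred_towards_map [where f = Abs and g = Abs]
  by (meson hred_towards_def hred.hred_abs par.par_Abs ipar.ipar_Abs)

lemma head_ipar_App_Abs:
  assumes "par (Abs s) t" "par b b'"
  shows "head_ipar (App (Abs s) b) (App t b')"
proof -
  from assms(1) obtain t' where "t = Abs t'" "par s t'"
    by (rule par_AbsE)
  with assms(2) show ?thesis
    by (simp add: head_ipar_if_ipar ipar.ipar_nabs ipar_nabs_redex)
qed

lemma head_ipar_App:
  assumes "head_ipar s t" "par s t" "par b b'"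
  shows "head_ipar (App s b) (App t b')"
proof -
  obtain L where "(hred_towards t)\<^sup>*\<^sup>* s L" "ipar L t"
    using assms(1) unfolding head_ipar_def by blast
  from this(1) assms(2) show ?thesis
  proof (induct rule: converse_rtranclp_induct)
    case base
    show ?case
    proof (cases "is_abs L")
      case True
      then obtain l where "L = Abs l"
        by (cases L) simp_all
      with base assms(3) show ?thesis
        using head_ipar_App_Abs by blast
    next
      case False
      with \<open>ipar L t\<close> assms(3) show ?thesis
        by (auto intro: head_ipar_if_ipar ipar.ipar_nabs ipar_nabs_App ipar_not_abs)
    qed
  next
    case (step s s1)
    show ?case
    proof (cases "is_abs s")
      case True
      then obtain l where "s = Abs l"
        by (cases s) simp_all
      with step(4) assms(3) show ?thesis
        using head_ipar_App_Abs by blast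
    next
      case False
      with step assms(3) have "hred_towards (App t b') (App s b) (App s1 b)"
        by (auto simp: hred_towards_def intro: hred.hred_app par.par_App)
      with step show ?thesis
        by (meson head_ipar_prepend r_into_rtranclp hred_towards_def)
    qed
  qed
qed

lemma ipar_nabs_subst:
  "ipar_nabs L N \<Longrightarrow> par u u' \<Longrightarrow> head_ipar u u' \<Longrightarrow> head_ipar (subst L u k) (subst N u' k)"
proof (induct rule: ipar_nabs.induct)
  case (ipar_nabs_Var n)
  then show ?case
    by (auto intro: head_ipar_if_ipar ipar.ipar_nabs ipar_nabs.ipar_nabs_Var)
next
  case (ipar_nabs_redex s s' v v')
  then show ?case
    by (auto intro!: head_ipar_if_ipar ipar.ipar_nabs ipar_nabs.ipar_nabs_redex par_subst par_lift)
next
  case (ipar_nabs_App s t v v')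
  then show ?case
    by (auto intro: head_ipar_App ipar_nabs_par par_subst)
qed

lemma ipar_subst:
  "ipar L N \<Longrightarrow> par u u' \<Longrightarrow> head_ipar u u' \<Longrightarrow> head_ipar (subst L u k) (subst N u' k)"
proof (induct arbitrary: u u' k rule: ipar.induct)
  case (ipar_Abs s t)
  then have "head_ipar (subst s (lift u 0) (Suc k)) (subst t (lift u' 0) (Suc k))"
    using par_lift head_ipar_lift by blast
  then show ?case
    by (simp add: head_ipar_Abs)
qed (simp add: ipar_nabs_subst)

lemma head_ipar_subst:
  assumes "head_ipar s s'" "par u u'" "head_ipar u u'"
  shows "head_ipar (subst s u k) (subst s' u' k)"
proof -
  obtain L where L: "(hred_towards s')\<^sup>*\<^sup>* s L" "ipar L s'"
    using assms(1) unfolding head_ipar_def by blast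
  have "(hred_towards (subst s' u' k))\<^sup>*\<^sup>* (subst s u k) (subst L u k)"
    using rtrancl_hred_towards_map [OF L(1), where f = "\<lambda>x. subst x u k" and g = "\<lambda>x. subst x u' k"]
      assms(2) by (simp add: hred_towards_def hred_subst par_subst)
  then show ?thesis
    using head_ipar_prepend ipar_subst [OF L(2) assms(2,3)] by blast
qed

lemma par_head_ipar: "par M N \<Longrightarrow> head_ipar M N"
proof (induct rule: par.induct)
  case (par_Var n)
  show ?case
    by (intro head_ipar_if_ipar ipar.ipar_nabs ipar_nabs_Var)
next
  case (par_Abs s t)
  then show ?case
    by (simp add: head_ipar_Abs)
next
  case (par_App s t u v)
  then show ?case
    by (simp add: head_ipar_App)
next
  case (par_beta s s' u u')
  then have "hred_towards (subst s' u' 0) (App (Abs s) u) (subst s u 0)"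
    by (simp add: hred_towards_def hred.hred_redex par_subst)
  moreover have "head_ipar (subst s u 0) (subst s' u' 0)"
    using par_beta by (simp add: head_ipar_subst)
  ultimately show ?case
    by (rule head_ipar_prepend [OF r_into_rtranclp])
qed

section \<open>Head normalisation\<close>

lemma ipar_nabs_hred_postpone: "ipar_nabs M N \<Longrightarrow> hred N N' \<Longrightarrow> \<exists>M'. hred M M' \<and> par M' N'"
proof (induct arbitrary: N' rule: ipar_nabs.induct)
  case (ipar_nabs_Var n)
  then show ?case
    by (auto elim: hred_VarE)
next
  case (ipar_nabs_redex s s' u u')
  then have "N' = subst s' u' 0"
    by (auto elim: hred_AppE)
  with ipar_nabs_redex.hyps show ?case
    using hred.hred_redex par_subst by blast
next
  case (ipar_nabs_App s t u u')
  have "\<not> is_abs s" "\<not> is_abs t"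
    using ipar_nabs_not_abs [OF ipar_nabs_App(1)] by simp_all
  with ipar_nabs_App.prems obtain t' where "hred t t'" "N' = App t' u'"
    by (auto elim: hred_AppE)
  with ipar_nabs_App.hyps(2) obtain s' where "hred s s'" "par s' t'"
    by blast
  then have "hred (App s u) (App s' u)" "par (App s' u) N'"
    using \<open>\<not> is_abs s\<close> \<open>N' = App t' u'\<close> ipar_nabs_App.hyps(3)
    by (simp_all add: hred.hred_app par.par_App)
  then show ?case
    by blast
qed

lemma ipar_hred_postpone: "ipar M N \<Longrightarrow> hred N N' \<Longrightarrow> \<exists>M'. hred M M' \<and> par M' N'"
proof (induct arbitrary: N' rule: ipar.induct)
  case (ipar_Abs s t)
  from ipar_Abs.prems obtain t' where "N' = Abs t'" "hred t t'"
    by (auto elim: hred_AbsE)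
  with ipar_Abs.hyps(2) show ?case
    by (metis hred.hred_abs par.par_Abs)
qed (rule ipar_nabs_hred_postpone)

lemma ipar_nabs_head_var_app: "ipar_nabs M N \<Longrightarrow> head_var_app N \<Longrightarrow> head_var_app M"
  by (induct rule: ipar_nabs.induct) auto

lemma ipar_hnf: "ipar M N \<Longrightarrow> is_hnf N \<Longrightarrow> is_hnf M"
proof (induct rule: ipar.induct)
  case (ipar_nabs s t)
  then show ?case
    using ipar_nabs_not_abs ipar_nabs_head_var_app by (cases s; cases t) auto
qed simp

lemma par_hred_hnf_reflect:
  assumes "hred\<^sup>*\<^sup>* N H" "is_hnf H" "par M N"
  shows "\<exists>H'. hred\<^sup>*\<^sup>* M H' \<and> is_hnf H'"
  using assms(1,3)
proof (induct arbitrary: M rule: converse_rtranclp_induct)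
  case base
  from par_head_ipar [OF base] obtain L where "(hred_towards H)\<^sup>*\<^sup>* M L" "ipar L H"
    unfolding head_ipar_def by blast
  with assms(2) show ?case
    by (auto dest: rtrancl_hred_towards_hred ipar_hnf)
next
  case (step N N1)
  from par_head_ipar [OF step.prems] obtain L where L: "(hred_towards N)\<^sup>*\<^sup>* M L" "ipar L N"
    unfolding head_ipar_def by blast
  from ipar_hred_postpone [OF L(2) step.hyps(1)] obtain L' where "hred L L'" "par L' N1"
    by blast
  moreover from this(2) step.hyps(3) obtain H' where "hred\<^sup>*\<^sup>* L' H'" "is_hnf H'"
    by blast
  ultimately show ?case
    using rtrancl_hred_towards_hred [OF L(1)] by (meson rtranclp.rtrancl_into_rtrancl rtranclp_trans)
qed

theorem has_hnf_iff_hred: "has_hnf M \<longleftrightarrow> (\<exists>H. hred\<^sup>*\<^sup>* M H \<and> is_hnf H)"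
proof
  assume "has_hnf M"
  then obtain u where "beta\<^sup>*\<^sup>* M u" "is_hnf u"
    unfolding has_hnf_def by blast
  then show "\<exists>H. hred\<^sup>*\<^sup>* M H \<and> is_hnf H"
  proof (induct rule: converse_rtranclp_induct)
    case (step a b)
    then obtain H where "hred\<^sup>*\<^sup>* b H" "is_hnf H"
      by blast
    then show ?case
      using beta_par [OF step(1)] by (rule par_hred_hnf_reflect)
  qed blast
qed (auto simp: has_hnf_def dest: rtrancl_hred_beta)

section \<open>Clocks decrease along parallel reduction\<close>

lemma par_hred_sim: "hred M M1 \<Longrightarrow> par M N \<Longrightarrow> \<exists>N1. (N1 = N \<or> hred N N1) \<and> par M1 N1"
proof (induct arbitrary: N rule: hred.induct)
  case (hred_redex s t)
  then show ?case
    by (auto elim!: par_AppE par_AbsE intro: hred.hred_redex par_subst)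
next
  case (hred_app s t u)
  from hred_app.prems hred_app.hyps(3) obtain s' u' where N: "N = App s' u'" "par s s'" "par u u'"
    by (auto elim: par_AppE)
  show ?case
  proof (cases "is_abs s'")
    case True
    \<comment> \<open>the head redex of \<open>s\<close> was contracted by the parallel step\<close>
    with N(2) hred_app.hyps(1,3) obtain a b a' b' where
      "s = App (Abs a) b" "s' = subst a' b' 0" "par a a'" "par b b'"
      by (cases s) (auto elim!: par_AppE elim: hred_VarE hred_AbsE)
    moreover from this(1) hred_app.hyps(1) have "t = subst a b 0"
      using hred_det hred.hred_redex by blast
    ultimately show ?thesis
      using N by (auto intro: par.par_App par_subst)
  next
    case False
    with hred_app.hyps(2) [OF N(2)] N show ?thesis
      by (auto intro: hred.hred_app par.par_App)
  qed
next
  case (hred_abs s t)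
  then show ?case
    by (auto elim!: par_AbsE intro: hred.hred_abs par.par_Abs)
qed

lemma par_head_var_app: "par M N \<Longrightarrow> head_var_app M \<Longrightarrow> head_var_app N"
  by (induct rule: par.induct) auto

lemma par_hnf: "par M N \<Longrightarrow> is_hnf M \<Longrightarrow> is_hnf N"
proof (induct rule: par.induct)
  case (par_App s t u v)
  then show ?case
    using par_head_var_app by (cases s; cases t) auto
qed auto

lemma par_hred_relpow_hnf:
  "(hred ^^ k) M H \<Longrightarrow> is_hnf H \<Longrightarrow> par M N \<Longrightarrow>
    \<exists>j H'. j \<le> k \<and> (hred ^^ j) N H' \<and> is_hnf H' \<and> par H H'"
proof (induct k arbitrary: M N)
  case 0
  then show ?case
    using par_hnf by fastforce
next
  case (Suc k)
  from Suc.prems(1) obtain M1 where M1: "hred M M1" "(hred ^^ k) M1 H"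
    by (metis relpowp_Suc_D2)
  from par_hred_sim [OF M1(1) Suc.prems(3)] obtain N1 where N1: "N1 = N \<or> hred N N1" "par M1 N1"
    by blast
  from Suc.hyps [OF M1(2) Suc.prems(2) N1(2)] obtain j H' where
    j: "j \<le> k" "(hred ^^ j) N1 H'" "is_hnf H'" "par H H'"
    by blast
  from N1(1) show ?case
  proof
    assume "N1 = N"
    with j show ?thesis
      by (metis le_Suc_eq)
  next
    assume "hred N N1"
    with j show ?thesis
      by (metis Suc_le_mono relpowp_Suc_I2)
  qed
qed

lemma rtrancl_beta_hred_relpow_hnf:
  "beta\<^sup>*\<^sup>* M N \<Longrightarrow> (hred ^^ k) M H \<Longrightarrow> is_hnf H \<Longrightarrow>
    \<exists>j H'. j \<le> k \<and> (hred ^^ j) N H' \<and> is_hnf H' \<and> beta\<^sup>*\<^sup>* H H'"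
proof (induct rule: rtranclp_induct)
  case (step y z)
  then obtain j H1 where j: "j \<le> k" "(hred ^^ j) y H1" "is_hnf H1" "beta\<^sup>*\<^sup>* H H1"
    by blast
  from par_hred_relpow_hnf [OF j(2,3) beta_par [OF step(2)]] obtain j' H2 where
    "j' \<le> j" "(hred ^^ j') z H2" "is_hnf H2" "par H1 H2"
    by blast
  with j show ?case
    by (meson le_trans par_rtrancl_beta rtranclp_trans)
qed blast

lemma beta_head_var_app: "beta M N \<Longrightarrow> head_var_app M \<Longrightarrow> head_var_app N"
  by (induct rule: beta.induct) auto

inductive_cases beta_VarE: "beta (Var n) t"
inductive_cases beta_AbsE: "beta (Abs s) t"
inductive_cases beta_AppE: "beta (App s u) t"

lemma rtrancl_beta_Var: "beta\<^sup>*\<^sup>* (Var y) N \<Longrightarrow> N = Var y"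
  by (induct rule: rtranclp_induct) (auto elim: beta_VarE)

lemma rtrancl_beta_Abs_inv: "beta\<^sup>*\<^sup>* (Abs s) N \<Longrightarrow> \<exists>s'. N = Abs s' \<and> beta\<^sup>*\<^sup>* s s'"
proof (induct rule: rtranclp_induct)
  case (step y z)
  then obtain s' where "y = Abs s'" "beta\<^sup>*\<^sup>* s s'"
    by blast
  with step(2) show ?case
    by (metis beta_AbsE rtranclp.rtrancl_into_rtrancl)
qed blast

lemma rtrancl_beta_head_var_app_inv:
  "beta\<^sup>*\<^sup>* (App f u) N \<Longrightarrow> head_var_app f \<Longrightarrow>
    \<exists>f' u'. N = App f' u' \<and> beta\<^sup>*\<^sup>* f f' \<and> beta\<^sup>*\<^sup>* u u' \<and> head_var_app f'"
proof (induct rule: rtranclp_induct)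
  case (step y z)
  then obtain f' u' where y: "y = App f' u'" "beta\<^sup>*\<^sup>* f f'" "beta\<^sup>*\<^sup>* u u'" "head_var_app f'"
    by blast
  from step(2) [unfolded y(1)] y(2-4) show ?case
    by (auto elim!: beta_AppE intro: rtranclp.rtrancl_into_rtrancl beta_head_var_app)
qed blast

lemma rtrancl_beta_hnfE:
  assumes "beta\<^sup>*\<^sup>* H H'" "is_hnf H"
  obtains (Var) y where "H = Var y" "H' = Var y"
  | (Abs) s s' where "H = Abs s" "H' = Abs s'" "is_hnf s" "beta\<^sup>*\<^sup>* s s'"
  | (App) f u f' u' where "H = App f u" "H' = App f' u'" "is_hnf f" "beta\<^sup>*\<^sup>* f f'" "beta\<^sup>*\<^sup>* u u'"
proof (cases H)
  case (Var y)
  with assms that show ?thesis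
    by (auto dest: rtrancl_beta_Var)
next
  case (Abs s)
  with assms that show ?thesis
    by (auto dest: rtrancl_beta_Abs_inv)
next
  case (App f u)
  with assms have "head_var_app f" "is_hnf f"
    by (auto elim: head_var_app.elims)
  with App assms that show ?thesis
    by (auto dest: rtrancl_beta_head_var_app_inv)
qed

coinductive clock_ge :: "abt \<Rightarrow> abt \<Rightarrow> bool" where
  clock_ge_Bot: "clock_ge ABot ABot"
| clock_ge_Var: "rel_option (\<ge>) a b \<Longrightarrow> clock_ge (AVar a y) (AVar b y)"
| clock_ge_Abs: "rel_option (\<ge>) a b \<Longrightarrow> clock_ge s t \<Longrightarrow> clock_ge (AAbs a s) (AAbs b t)"
| clock_ge_App: "rel_option (\<ge>) a b \<Longrightarrow> clock_ge f g \<Longrightarrow> clock_ge u v \<Longrightarrow>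
    clock_ge (AApp a f u) (AApp b g v)"

lemma erase_simps [simp]:
  "erase ABot = BBot"
  "erase (AVar a y) = BVar y"
  "erase (AAbs a s) = BAbs (erase s)"
  "erase (AApp a f u) = BApp (erase f) (erase u)"
  by (subst erase.code; simp)+

lemma clock_ge_erase: "clock_ge T1 T2 \<Longrightarrow> erase T1 = erase T2"
proof (coinduction arbitrary: T1 T2 rule: bt.coinduct)
  case Eq_bt
  then show ?case
    by (cases rule: clock_ge.cases) auto
qed

lemma clock_ge_subtree_at:
  "clock_ge T1 T2 \<Longrightarrow> rel_option clock_ge (subtree_at T1 p) (subtree_at T2 p)"
proof (induct p arbitrary: T1 T2)
  case (Cons i p)
  from Cons.prems show ?case
    by (cases rule: clock_ge.cases) (auto simp: Cons.hyps)
qed simp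

lemma clock_ge_clock_at:
  assumes "clock_ge T1 T2"
  shows "rel_option (\<ge>) (clock_at T1 p) (clock_at T2 p)"
proof -
  have root: "rel_option (\<ge>) (root_ann S1) (root_ann S2)" if "clock_ge S1 S2" for S1 S2
    using that by (cases rule: clock_ge.cases) auto
  from clock_ge_subtree_at [OF assms, of p] show ?thesis
    unfolding clock_at_def by (cases "subtree_at T1 p"; cases "subtree_at T2 p") (simp_all add: root)
qed

definition cbt_node :: "nat option \<Rightarrow> dB \<Rightarrow> abt" where
  "cbt_node a h = (case h of
     Var y \<Rightarrow> AVar a y
   | Abs s \<Rightarrow> AAbs a (cbt_aux False s)
   | App f u \<Rightarrow> AApp a (cbt_aux False f) (cbt_aux True u))"

lemma cbt_aux_False: "cbt_aux False t = cbt_node None t"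
  unfolding cbt_node_def by (subst cbt_aux.code) simp

lemma cbt_aux_True: "has_hnf t \<Longrightarrow> cbt_aux True t = cbt_node (Some (clock t)) (hnf_of t)"
  unfolding cbt_node_def by (subst cbt_aux.code) simp

lemma cbt_aux_True_Bot: "\<not> has_hnf t \<Longrightarrow> cbt_aux True t = ABot"
  by (subst cbt_aux.code) simp

lemma cbt_aux_rtrancl_beta_cases:
  assumes "beta\<^sup>*\<^sup>* a b" "\<not> r \<longrightarrow> is_hnf a"
  obtains (Bot) "cbt_aux r a = ABot" "cbt_aux r b = ABot"
  | (Node) ka kb H H' where "cbt_aux r a = cbt_node ka H" "cbt_aux r b = cbt_node kb H'"
      "rel_option (\<ge>) ka kb" "is_hnf H" "beta\<^sup>*\<^sup>* H H'"
proof (cases r)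
  case False
  with assms show ?thesis
    using Node [of None a None b] by (simp add: cbt_aux_False)
next
  case True
  show ?thesis
  proof (cases "has_hnf a")
    case False
    with assms(1) have "\<not> has_hnf b"
      unfolding has_hnf_def by (meson rtranclp_trans)
    with False True show ?thesis
      using Bot by (simp add: cbt_aux_True_Bot)
  next
    case has_hnf_a: True
    then obtain k H where k: "(hred ^^ k) a H" "is_hnf H"
      unfolding has_hnf_iff_hred by (metis rtranclp_power)
    with assms(1) obtain j H' where j: "j \<le> k" "(hred ^^ j) b H'" "is_hnf H'" "beta\<^sup>*\<^sup>* H H'"
      by (metis rtrancl_beta_hred_relpow_hnf)
    then have "has_hnf b"
      unfolding has_hnf_iff_hred by (metis relpowp_imp_rtranclp)
    with has_hnf_a True k j show ?thesis
      using Node [of "Some k" H "Some j" H'] clock_hnf_of_eq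
      by (simp add: cbt_aux_True)
  qed
qed

lemma clock_ge_cbt_aux:
  assumes "beta\<^sup>*\<^sup>* a b" "\<not> r \<longrightarrow> is_hnf a"
  shows "clock_ge (cbt_aux r a) (cbt_aux r b)"
  using assms
proof (coinduction arbitrary: r a b rule: clock_ge.coinduct)
  case clock_ge
  then show ?case
  proof (cases rule: cbt_aux_rtrancl_beta_cases)
    case Bot
    then show ?thesis
      by simp
  next
    case (Node ka kb H H')
    from Node(5,4) show ?thesis
      by (cases rule: rtrancl_beta_hnfE) (use Node in \<open>auto simp: cbt_node_def\<close>)
  qed
qed

theorem proposition6p5:
  assumes "beta\<^sup>*\<^sup>* M N"
  shows "BT M = BT N \<and>
    (\<forall>p. (clock_at (cBT M) p = None \<and> clock_at (cBT N) p = None) \<or>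
         (\<exists>k1 k2. clock_at (cBT M) p = Some k1 \<and> clock_at (cBT N) p = Some k2 \<and> k1 \<ge> k2))"
proof -
  have ge: "clock_ge (cBT M) (cBT N)"
    unfolding cBT_def using assms by (rule clock_ge_cbt_aux) simp
  then have "BT M = BT N"
    unfolding BT_def by (rule clock_ge_erase)
  moreover have "(clock_at (cBT M) p = None \<and> clock_at (cBT N) p = None) \<or>
      (\<exists>k1 k2. clock_at (cBT M) p = Some k1 \<and> clock_at (cBT N) p = Some k2 \<and> k1 \<ge> k2)" for p
    using clock_ge_clock_at [OF ge, of p]
    by (cases "clock_at (cBT M) p"; cases "clock_at (cBT N) p") simp_all
  ultimately show ?thesis
    by blast
qed

end
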